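(* Suppose Assumption 1 holds. Let $x\in\operatorname{dom}\psi$, let $H$ be a symmetric matrix with $\lambda_{\min}(H)=\sigma>0$, and let $d$ satisfy the $\eta$-inexactness condition for $Q^x_H$ for some $\eta\in[0,1)$. Then, with $\Delta \coloneqq \nabla f(x)^Td + \psi(x+d)-\psi(x)$, $$\Delta \le -\frac{1}{1+\sqrt\eta}\, d^THd \le -\frac{\sigma}{1+\sqrt\eta}\|d\|^2.$$ Moreover, for any $\beta,\gamma\in(0,1)$ the backtracking procedure that returns $\alpha=\beta^i$ for the smallest nonnegative integer $i$ with $F(x+\alpha d)\le F(x)+\alpha\gamma\Delta$ terminates after finitely many steps and $$\alpha\ge \bar\alpha\coloneqq \min\left\{1,\ \frac{2\beta(1-\gamma)\sigma}{L(1+\sqrt\eta)}\right\}.$$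
   Context: Problem setting: $F(x)=f(x)+\psi(x)$ on $\mathbb{R}^n$. Assumption 1: $f:\mathbb{R}^n\to\mathbb{R}$ is differentiable with $L$-Lipschitz continuous gradient for some $L>0$; $\psi:\mathbb{R}^n\to\mathbb{R}\cup\{+\infty\}$ is convex, proper and closed; $F$ is bounded below; and the solution set $\Omega=\{x: F(x)=F^*\}$, $F^*=\inf F$, is nonempty. For $x\in\mathbb{R}^n$ and a symmetric matrix $H$, $Q^x_H(d) \coloneqq \nabla f(x)^T d + \frac12 d^T H d + \psi(x+d) - \psi(x)$ (so $Q^x_H(0)=0$) and $Q^*\coloneqq\inf_d Q^x_H(d)$. A vector $d$ satisfies the $\eta$-inexactness condition (for $Q=Q^x_H$) if $Q(d)-Q^*\le \eta(Q(0)-Q^* )$, equivalently $Q(d)\le(1-\eta)Q^*$. $\lambda_{\min}(H)$ denotes the smallest eigenvalue of $H$. *)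

theory Defs
  imports "HOL-Analysis.Analysis"
begin

definition dom_fun :: "('a \<Rightarrow> ereal) \<Rightarrow> 'a set" where
  "dom_fun g = {x. g x < \<infinity>}"

definition ext_convex :: "('a::real_vector \<Rightarrow> ereal) \<Rightarrow> bool" where
  "ext_convex g \<longleftrightarrow> (\<forall>x y (t::real). 0 \<le> t \<and> t \<le> 1 \<longrightarrow>
      g ((1 - t) *\<^sub>R x + t *\<^sub>R y) \<le> ereal (1 - t) * g x + ereal t * g y)"

definition ext_proper :: "('a \<Rightarrow> ereal) \<Rightarrow> bool" where
  "ext_proper g \<longleftrightarrow> (\<forall>x. g x \<noteq> -\<infinity>) \<and> dom_fun g \<noteq> {}"

definition ext_closed :: "('a::topological_space \<Rightarrow> ereal) \<Rightarrow> bool" where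
  "ext_closed g \<longleftrightarrow> closed {(x, r::real). g x \<le> ereal r}"

definition lambda_min :: "real^'n^'n \<Rightarrow> real" where
  "lambda_min H = Min {l. \<exists>v. v \<noteq> 0 \<and> H *v v = l *\<^sub>R v}"

definition Qmodel :: "(real^'n) \<Rightarrow> ((real^'n) \<Rightarrow> ereal) \<Rightarrow> real^'n \<Rightarrow> real^'n^'n \<Rightarrow> real^'n \<Rightarrow> ereal" where
  "Qmodel g \<psi> x H d = ereal (g \<bullet> d + (1/2) * (d \<bullet> (H *v d))) + \<psi> (x + d) - \<psi> x"

definition Qstar :: "(real^'n) \<Rightarrow> ((real^'n) \<Rightarrow> ereal) \<Rightarrow> real^'n \<Rightarrow> real^'n^'n \<Rightarrow> ereal" where
  "Qstar g \<psi> x H = (INF d. Qmodel g \<psi> x H d)"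

definition eta_inexact :: "real \<Rightarrow> (real^'n) \<Rightarrow> ((real^'n) \<Rightarrow> ereal) \<Rightarrow> real^'n \<Rightarrow> real^'n^'n \<Rightarrow> real^'n \<Rightarrow> bool" where
  "eta_inexact \<eta> g \<psi> x H d \<longleftrightarrow>
     Qmodel g \<psi> x H d - Qstar g \<psi> x H \<le> ereal \<eta> * (Qmodel g \<psi> x H 0 - Qstar g \<psi> x H)"

end

theory Submission
  imports Defs
begin

text \<open>
  Write \<open>a = d\<^sup>T H d\<close> and \<open>\<Delta> = \<nabla>f(x)\<^sup>T d + \<psi>(x+d) - \<psi>(x)\<close>. Convexity of \<open>\<psi>\<close> gives
  \<open>Q(t d) \<le> t \<Delta> + t\<^sup>2 a/2\<close> for \<open>t \<in> [0,1]\<close>, so \<open>Q* \<le> Q(t d)\<close> together with the inexactness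
  condition \<open>Q(d) \<le> (1 - \<eta>) Q*\<close> yields \<open>\<Delta> + a/2 \<le> (1 - \<eta>)(t \<Delta> + t\<^sup>2 a/2)\<close>. At \<open>t = -\<Delta>/a\<close>
  this becomes \<open>(a + (1 + \<surd>\<eta>)\<Delta>)(a + (1 - \<surd>\<eta>)\<Delta>) \<le> 0\<close>, whence \<open>\<Delta> \<le> -a/(1 + \<surd>\<eta>)\<close>; and
  \<open>a \<ge> \<sigma>\<parallel>d\<parallel>\<^sup>2\<close> because the least eigenvalue of a symmetric matrix is its minimal Rayleigh
  quotient. For the line search, the descent lemma \<open>f(x + \<alpha> d) \<le> f(x) + \<alpha> \<nabla>f(x)\<^sup>T d + L \<alpha>\<^sup>2\<parallel>d\<parallel>\<^sup>2/2\<close>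
  and convexity of \<open>\<psi>\<close> show that the Armijo condition holds for every
  \<open>\<alpha> \<le> 2(1 - \<gamma>)\<sigma>/(L(1 + \<surd>\<eta>))\<close>, so backtracking stops at the latest one step after \<open>\<beta>\<^sup>i\<close>
  drops below this threshold.
\<close>

lemma linear_coeff_zero_if_quadratic_nonneg:
  fixes b c :: real
  assumes nonneg: "\<And>t. 0 \<le> 2 * t * b + t^2 * c"
  shows "b = 0"
proof (rule ccontr)
  assume "b \<noteq> 0"
  define k where "k = \<bar>c\<bar> + 1"
  define t where "t = - b / k"
  have k: "k > 0" "c \<le> k - 1" by (auto simp: k_def)
  have "k^2 * (2 * t * b + t^2 * (k - 1)) = - (b^2 * (k + 1))"
    using k by (simp add: t_def power2_eq_square field_simps)
  also have "\<dots> < 0" using \<open>b \<noteq> 0\<close> k by simp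
  finally have "2 * t * b + t^2 * (k - 1) < 0" by (simp add: mult_less_0_iff)
  moreover have "t^2 * c \<le> t^2 * (k - 1)" using k by (simp add: mult_left_mono)
  ultimately show False using nonneg[of t] by linarith
qed

lemma inner_matrix_vector_symmetric:
  fixes H :: "real^'n^'n"
  assumes "transpose H = H"
  shows "(H *v u) \<bullet> w = u \<bullet> (H *v w)"
  by (metis assms dot_lmul_matrix transpose_matrix_vector)

lemma psd_quadratic_form_zero_imp_kernel:
  fixes M :: "real^'n^'n"
  assumes sym: "transpose M = M" and psd: "\<And>v. 0 \<le> v \<bullet> (M *v v)"
    and zero: "u \<bullet> (M *v u) = 0"
  shows "M *v u = 0"
proof -
  have "w \<bullet> (M *v u) = 0" for w
  proof (rule linear_coeff_zero_if_quadratic_nonneg)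
    fix t :: real
    have "(u + t *\<^sub>R w) \<bullet> (M *v (u + t *\<^sub>R w)) = 2 * t * (w \<bullet> (M *v u)) + t^2 * (w \<bullet> (M *v w))"
      using zero inner_matrix_vector_symmetric[OF sym, of w u]
      by (simp add: matrix_vector_right_distrib matrix_vector_mult_scaleR inner_add_left
          inner_add_right power2_eq_square algebra_simps inner_commute)
    then show "0 \<le> 2 * t * (w \<bullet> (M *v u)) + t^2 * (w \<bullet> (M *v w))"
      by (metis psd)
  qed
  from this[of "M *v u"] show ?thesis by simp
qed

lemma finite_eigenvalues_symmetric:
  fixes H :: "real^'n^'n"
  assumes sym: "transpose H = H"
  shows "finite {l. \<exists>v. v \<noteq> 0 \<and> H *v v = l *\<^sub>R v}" (is "finite ?E")
proof (rule ccontr)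
  assume "infinite ?E"
  then obtain B where B: "finite B" "card B = DIM(real^'n) + 1" "B \<subseteq> ?E"
    using infinite_arbitrarily_large by blast
  then have "\<forall>l\<in>B. \<exists>v. v \<noteq> 0 \<and> H *v v = l *\<^sub>R v" by blast
  then obtain ev where ev: "\<And>l. l \<in> B \<Longrightarrow> ev l \<noteq> 0 \<and> H *v ev l = l *\<^sub>R ev l"
    by metis
  have orth: "ev l1 \<bullet> ev l2 = 0" if "l1 \<in> B" "l2 \<in> B" "l1 \<noteq> l2" for l1 l2
  proof -
    have "l1 * (ev l1 \<bullet> ev l2) = (H *v ev l1) \<bullet> ev l2" using ev[OF that(1)] by simp
    also have "\<dots> = ev l1 \<bullet> (H *v ev l2)" by (rule inner_matrix_vector_symmetric[OF sym])
    also have "\<dots> = l2 * (ev l1 \<bullet> ev l2)" using ev[OF that(2)] by simp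
    finally show ?thesis using that(3) by simp
  qed
  have inj: "inj_on ev B"
    by (rule inj_onI) (metis ev orth inner_eq_zero_iff)
  have "independent (ev ` B)"
    by (rule pairwise_orthogonal_independent)
      (use orth ev in \<open>auto simp: pairwise_def orthogonal_def\<close>)
  then have "card (ev ` B) \<le> DIM(real^'n)" by (rule independent_bound[THEN conjunct2])
  then show False using B(2) card_image[OF inj] by simp
qed

lemma rayleigh_minimizer_eigenvector:
  fixes H :: "real^'n^'n"
  assumes sym: "transpose H = H"
  obtains u m where "u \<noteq> 0" "H *v u = m *\<^sub>R u" "\<And>w. m * (norm w)^2 \<le> w \<bullet> (H *v w)"
proof -
  let ?q = "\<lambda>y. y \<bullet> (H *v y)"
  obtain u where u: "u \<in> sphere 0 1" "\<And>y. y \<in> sphere 0 1 \<Longrightarrow> ?q u \<le> ?q y"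
  proof -
    have "continuous_on (sphere 0 1) ?q" by (intro continuous_intros)
    moreover have "sphere (0::real^'n) 1 \<noteq> {}" by simp
    ultimately show thesis
      using continuous_attains_inf[OF compact_sphere] that by blast
  qed
  define m where "m = ?q u"
  have bound: "m * (norm w)^2 \<le> ?q w" for w
  proof (cases "w = 0")
    case False
    have "m \<le> ?q ((1 / norm w) *\<^sub>R w)" unfolding m_def using False by (intro u(2)) simp
    also have "\<dots> = ?q w / (norm w)^2"
      by (simp add: matrix_vector_mult_scaleR power2_eq_square)
    finally show ?thesis using False by (simp add: pos_le_divide_eq)
  qed simp
  define M where "M = H - m *\<^sub>R mat 1"
  have Mv: "M *v w = H *v w - m *\<^sub>R w" for w
    unfolding M_def
    by (simp add: matrix_vector_mult_diff_rdistrib scaleR_matrix_vector_assoc[symmetric])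
  have "transpose M = M"
    using sym unfolding M_def by (simp add: transpose_def mat_def vec_eq_iff)
  then have "M *v u = 0"
  proof (rule psd_quadratic_form_zero_imp_kernel)
    show "0 \<le> w \<bullet> (M *v w)" for w
      using bound[of w] by (simp add: Mv inner_diff_right power2_norm_eq_inner)
    show "u \<bullet> (M *v u) = 0"
      using u(1) by (simp add: Mv inner_diff_right m_def power2_norm_eq_inner[symmetric])
  qed
  then have "H *v u = m *\<^sub>R u" by (simp add: Mv)
  moreover have "u \<noteq> 0" using u(1) by auto
  ultimately show thesis using bound that by blast
qed

lemma quadratic_form_ge_lambda_min:
  fixes H :: "real^'n^'n"
  assumes sym: "transpose H = H"
  shows "lambda_min H * (norm v)^2 \<le> v \<bullet> (H *v v)"
proof -
  obtain u m where "u \<noteq> 0" "H *v u = m *\<^sub>R u" and bound: "\<And>w. m * (norm w)^2 \<le> w \<bullet> (H *v w)"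
    using rayleigh_minimizer_eigenvector[OF sym] by blast
  then have "lambda_min H \<le> m"
    unfolding lambda_min_def by (intro Min_le finite_eigenvalues_symmetric[OF sym]) blast
  then have "lambda_min H * (norm v)^2 \<le> m * (norm v)^2" by (simp add: mult_right_mono)
  then show ?thesis using bound[of v] by linarith
qed

lemma lipschitz_gradient_quadratic_upper_bound:
  fixes f :: "'a::real_inner \<Rightarrow> real"
  assumes grad: "\<And>y. (f has_derivative (\<lambda>h. gradf y \<bullet> h)) (at y)"
    and Lip: "\<And>y z. norm (gradf y - gradf z) \<le> L * norm (y - z)"
  shows "f (y + h) \<le> f y + gradf y \<bullet> h + L/2 * (norm h)^2"
proof -
  define \<phi> where "\<phi> t = f (y + t *\<^sub>R h) - t * (gradf y \<bullet> h) - L/2 * t^2 * (norm h)^2" for t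
  have deriv: "(\<phi> has_real_derivative (gradf (y + t *\<^sub>R h) - gradf y) \<bullet> h - L * t * (norm h)^2) (at t)"
    for t
  proof -
    have "((\<lambda>t. f (y + t *\<^sub>R h)) has_derivative (\<lambda>s. gradf (y + t *\<^sub>R h) \<bullet> (s *\<^sub>R h))) (at t)"
      by (rule has_derivative_compose[OF _ grad]) (auto intro!: derivative_eq_intros)
    then have "((\<lambda>t. f (y + t *\<^sub>R h)) has_real_derivative gradf (y + t *\<^sub>R h) \<bullet> h) (at t)"
      by (simp add: has_field_derivative_def mult.commute[of _ "gradf (y + t *\<^sub>R h) \<bullet> h"])
    then show ?thesis
      unfolding \<phi>_def[abs_def] by (auto intro!: derivative_eq_intros simp: inner_diff_left)
  qed
  have "\<phi> 1 \<le> \<phi> 0"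
  proof (rule DERIV_nonpos_imp_nonincreasing[of 0 1 \<phi>])
    fix t :: real assume t: "0 \<le> t" "t \<le> 1"
    have "(gradf (y + t *\<^sub>R h) - gradf y) \<bullet> h \<le> norm (gradf (y + t *\<^sub>R h) - gradf y) * norm h"
      by (rule norm_cauchy_schwarz)
    also have "\<dots> \<le> L * norm (t *\<^sub>R h) * norm h"
      using Lip[of "y + t *\<^sub>R h" y] by (simp add: mult_right_mono)
    also have "\<dots> = L * t * (norm h)^2" using t by (simp add: power2_eq_square)
    finally show "\<exists>D. (\<phi> has_real_derivative D) (at t) \<and> D \<le> 0" using deriv by force
  qed simp
  then show ?thesis by (simp add: \<phi>_def)
qed

lemma ext_convex_segment_finite:
  assumes cvx: "ext_convex \<psi>" and ninf: "\<psi> (x + t *\<^sub>R d) \<noteq> -\<infinity>"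
    and px: "\<psi> x = ereal px" and p: "\<psi> (x + d) = ereal p" and t: "0 \<le> t" "t \<le> 1"
  obtains pt where "\<psi> (x + t *\<^sub>R d) = ereal pt" "pt \<le> (1 - t) * px + t * p"
proof -
  have "(1 - t) *\<^sub>R x + t *\<^sub>R (x + d) = x + t *\<^sub>R d" by (simp add: algebra_simps)
  then have "\<psi> (x + t *\<^sub>R d) \<le> ereal ((1 - t) * px + t * p)"
    using cvx t unfolding ext_convex_def by (metis px p times_ereal.simps(1) plus_ereal.simps(1))
  with ninf that show thesis by (cases "\<psi> (x + t *\<^sub>R d)") auto
qed

lemma inexact_model_scalar_bound:
  fixes D a \<eta> :: real
  assumes a: "0 \<le> a" and eta: "0 \<le> \<eta>" "\<eta> < 1"
    and model: "\<And>t. 0 \<le> t \<Longrightarrow> t \<le> 1 \<Longrightarrow> D + a/2 \<le> (1 - \<eta>) * (t * D + t^2 * a / 2)"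
  shows "D \<le> - (1 / (1 + sqrt \<eta>)) * a"
proof -
  define s where "s = sqrt \<eta>"
  have s: "0 \<le> s" "s^2 = \<eta>" using eta by (auto simp: s_def)
  have "(1 + s) * D + a \<le> 0"
  proof (cases "D \<le> -a")
    case True
    moreover have "s * D \<le> 0" using True s a by (intro mult_nonneg_nonpos) auto
    ultimately show ?thesis by (simp add: algebra_simps)
  next
    case False
    have "D + a/2 \<le> 0" using model[of 0] by simp
    with False have D: "D < 0" and "a > 0" by linarith+
    \<comment> \<open>the minimiser of the right-hand side of \<open>model\<close>\<close>
    define t where "t = - D / a"
    have "0 \<le> t" "t \<le> 1" using D \<open>a > 0\<close> False by (auto simp: t_def field_simps)
    then have "D + a/2 \<le> (1 - \<eta>) * (t * D + t^2 * a / 2)" by (rule model)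
    also have "t * D + t^2 * a / 2 = - (D^2) / (2 * a)"
      using \<open>a > 0\<close> by (simp add: t_def power2_eq_square field_simps)
    finally have "2 * a * (D + a/2) \<le> - (1 - s^2) * D^2"
      using \<open>a > 0\<close> s by (simp add: field_simps)
    then have "(a + (1 + s) * D) * (a + (1 - s) * D) \<le> 0"
      by (simp add: power2_eq_square algebra_simps)
    moreover have "s * D \<le> 0" using D s by (intro mult_nonneg_nonpos) auto
    then have "a + (1 - s) * D > 0" using False by (simp add: algebra_simps)
    ultimately have "a + (1 + s) * D \<le> 0" by (simp add: mult_le_0_iff)
    then show ?thesis by (simp add: algebra_simps)
  qed
  then have "D * (1 + s) \<le> - a" by (simp add: algebra_simps)
  moreover have "0 < 1 + s" using s by simp
  ultimately have "D \<le> - a / (1 + s)" by (simp add: field_simps)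
  then show ?thesis by (simp add: s_def)
qed

text \<open>
  With \<open>t = min 1 (\<sigma>/L)\<close> the descent lemma and convexity give \<open>t Q(e) \<ge> F(x + t e) - F(x)\<close>,
  so the lower bound of \<open>F\<close> bounds the model from below.
\<close>
lemma Qstar_neq_minf:
  fixes f :: "real^'n \<Rightarrow> real" and \<psi> :: "real^'n \<Rightarrow> ereal"
  assumes grad: "\<And>y. (f has_derivative (\<lambda>h. gradf y \<bullet> h)) (at y)"
    and Lip: "\<And>y z. norm (gradf y - gradf z) \<le> L * norm (y - z)" and L: "0 < L"
    and cvx: "ext_convex \<psi>" and ninf: "\<And>y. \<psi> y \<noteq> -\<infinity>" and px: "\<psi> x = ereal px"
    and bdd: "\<And>y. ereal c \<le> ereal (f y) + \<psi> y"
    and coercive: "\<And>v. \<sigma> * (norm v)^2 \<le> v \<bullet> (H *v v)" and \<sigma>: "0 < \<sigma>"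
  shows "Qstar (gradf x) \<psi> x H \<noteq> -\<infinity>"
proof -
  define t where "t = min 1 (\<sigma> / L)"
  have t: "0 < t" "t \<le> 1" "L * t \<le> \<sigma>" using L \<sigma> by (auto simp: t_def min_def field_simps)
  have "ereal ((c - f x - px) / t) \<le> Qmodel (gradf x) \<psi> x H e" for e
  proof (cases "\<psi> (x + e)")
    case (real p)
    obtain pt where pt: "\<psi> (x + t *\<^sub>R e) = ereal pt" "pt \<le> (1 - t) * px + t * p"
      using ext_convex_segment_finite[OF cvx ninf px real, of t] t by auto
    have "c \<le> f (x + t *\<^sub>R e) + pt" using bdd[of "x + t *\<^sub>R e"] pt by simp
    moreover have "f (x + t *\<^sub>R e) \<le> f x + t * (gradf x \<bullet> e) + L/2 * t^2 * (norm e)^2"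
      using lipschitz_gradient_quadratic_upper_bound[OF grad Lip, of x "t *\<^sub>R e"]
      by (simp add: power_mult_distrib)
    moreover have "L * t^2 * (norm e)^2 \<le> t * (e \<bullet> (H *v e))"
    proof -
      have "L * t^2 * (norm e)^2 = (L * t) * (t * (norm e)^2)" by (simp add: power2_eq_square)
      also have "\<dots> \<le> \<sigma> * (t * (norm e)^2)" using t by (intro mult_right_mono) auto
      also have "\<dots> = t * (\<sigma> * (norm e)^2)" by simp
      also have "\<dots> \<le> t * (e \<bullet> (H *v e))" using t by (intro mult_left_mono coercive) auto
      finally show ?thesis .
    qed
    ultimately have "c - f x - px \<le> t * (gradf x \<bullet> e + 1/2 * (e \<bullet> (H *v e)) + p - px)"
      using pt(2) by (simp add: algebra_simps)
    then show ?thesis using t by (simp add: Qmodel_def real px pos_divide_le_eq mult.commute)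
  qed (use ninf in \<open>auto simp: Qmodel_def px\<close>)
  then have "ereal ((c - f x - px) / t) \<le> Qstar (gradf x) \<psi> x H"
    unfolding Qstar_def by (rule INF_greatest)
  then show ?thesis by auto
qed

lemma eta_inexact_decrease:
  fixes \<psi> :: "real^'n \<Rightarrow> ereal"
  assumes cvx: "ext_convex \<psi>" and ninf: "\<And>y. \<psi> y \<noteq> -\<infinity>" and px: "\<psi> x = ereal px"
    and Qfin: "Qstar g \<psi> x H \<noteq> -\<infinity>" and psd: "0 \<le> d \<bullet> (H *v d)"
    and eta: "0 \<le> \<eta>" "\<eta> < 1" and inexact: "eta_inexact \<eta> g \<psi> x H d"
  shows "ereal (g \<bullet> d) + \<psi> (x + d) - \<psi> x \<le> ereal (- (1 / (1 + sqrt \<eta>)) * (d \<bullet> (H *v d)))"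
proof -
  define a where "a = d \<bullet> (H *v d)"
  have Qle: "Qstar g \<psi> x H \<le> Qmodel g \<psi> x H e" for e
    unfolding Qstar_def by (rule INF_lower) simp
  have Q0: "Qmodel g \<psi> x H 0 = 0" by (simp add: Qmodel_def px)
  obtain q where q: "Qstar g \<psi> x H = ereal q"
    using Qfin Qle[of 0] Q0 by (cases "Qstar g \<psi> x H") auto
  have inex: "Qmodel g \<psi> x H d - ereal q \<le> ereal (\<eta> * (- q))"
    using inexact unfolding eta_inexact_def q Q0 by simp
  obtain p where p: "\<psi> (x + d) = ereal p"
    using inex ninf[of "x + d"] by (cases "\<psi> (x + d)") (auto simp: Qmodel_def px)
  define D where "D = g \<bullet> d + p - px"
  have q_le: "q \<le> t * D + t^2 * a / 2" if t: "0 \<le> t" "t \<le> 1" for t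
  proof -
    obtain pt where pt: "\<psi> (x + t *\<^sub>R d) = ereal pt" "pt \<le> (1 - t) * px + t * p"
      using ext_convex_segment_finite[OF cvx ninf px p t] .
    have "ereal q \<le> Qmodel g \<psi> x H (t *\<^sub>R d)" using Qle q by metis
    then show ?thesis using pt(2)
      by (simp add: Qmodel_def pt px a_def D_def matrix_vector_mult_scaleR power2_eq_square algebra_simps)
  qed
  have "D + a/2 \<le> (1 - \<eta>) * (t * D + t^2 * a / 2)" if "0 \<le> t" "t \<le> 1" for t
  proof -
    have "(1 - \<eta>) * q \<le> (1 - \<eta>) * (t * D + t^2 * a / 2)"
      using q_le[OF that] eta by (intro mult_left_mono) auto
    moreover have "D + a/2 - q \<le> \<eta> * (- q)" using inex by (simp add: Qmodel_def p px D_def a_def)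
    ultimately show ?thesis by (simp add: algebra_simps)
  qed
  then have "D \<le> - (1 / (1 + sqrt \<eta>)) * a"
    by (intro inexact_model_scalar_bound) (use psd eta in \<open>auto simp: a_def\<close>)
  then show ?thesis by (simp add: p px D_def a_def)
qed

lemma armijo_condition_small_step:
  fixes f :: "'a::real_inner \<Rightarrow> real" and \<psi> :: "'a \<Rightarrow> ereal"
  assumes grad: "\<And>y. (f has_derivative (\<lambda>h. gradf y \<bullet> h)) (at y)"
    and Lip: "\<And>y z. norm (gradf y - gradf z) \<le> L * norm (y - z)"
    and cvx: "ext_convex \<psi>" and ninf: "\<And>y. \<psi> y \<noteq> -\<infinity>"
    and px: "\<psi> x = ereal px" and p: "\<psi> (x + d) = ereal p"
    and decrease: "gradf x \<bullet> d + p - px \<le> - \<kappa> * (norm d)^2"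
    and \<alpha>: "0 < \<alpha>" "\<alpha> \<le> 1" "\<alpha> * L \<le> 2 * (1 - \<gamma>) * \<kappa>" and \<gamma>: "\<gamma> \<le> 1"
  shows "ereal (f (x + \<alpha> *\<^sub>R d)) + \<psi> (x + \<alpha> *\<^sub>R d)
           \<le> ereal (f x) + \<psi> x + ereal (\<alpha> * \<gamma>) * ereal (gradf x \<bullet> d + p - px)"
proof -
  define D where "D = gradf x \<bullet> d + p - px"
  obtain pa where pa: "\<psi> (x + \<alpha> *\<^sub>R d) = ereal pa" "pa \<le> (1 - \<alpha>) * px + \<alpha> * p"
    using ext_convex_segment_finite[OF cvx ninf px p, of \<alpha>] \<alpha> by auto
  have f: "f (x + \<alpha> *\<^sub>R d) \<le> f x + \<alpha> * (gradf x \<bullet> d) + L/2 * \<alpha>^2 * (norm d)^2"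
    using lipschitz_gradient_quadratic_upper_bound[OF grad Lip, of x "\<alpha> *\<^sub>R d"]
    by (simp add: power_mult_distrib)
  have "\<alpha> * L * (norm d)^2 \<le> 2 * (1 - \<gamma>) * \<kappa> * (norm d)^2"
    using \<alpha>(3) by (rule mult_right_mono) simp
  moreover have "(1 - \<gamma>) * D \<le> (1 - \<gamma>) * (- \<kappa> * (norm d)^2)"
    using decrease \<gamma> by (intro mult_left_mono) (auto simp: D_def)
  ultimately have "\<alpha> * (\<alpha> * L * (norm d)^2 + 2 * (1 - \<gamma>) * D) \<le> 0"
    using \<alpha>(1) by (intro mult_nonneg_nonpos) (auto simp: algebra_simps)
  then have "f (x + \<alpha> *\<^sub>R d) + pa \<le> f x + px + \<alpha> * \<gamma> * D"
    using f pa(2) by (simp add: D_def algebra_simps power2_eq_square)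
  then show ?thesis by (simp add: pa px D_def)
qed

lemma backtracking_terminates:
  fixes \<beta> \<alpha> :: real
  assumes \<beta>: "0 < \<beta>" "\<beta> < 1" and \<alpha>: "0 < \<alpha>" and accept: "\<And>i. \<beta> ^ i \<le> \<alpha> \<Longrightarrow> P i"
  shows "\<exists>i. P i" and "min 1 (\<beta> * \<alpha>) \<le> \<beta> ^ (LEAST i. P i)"
proof -
  obtain i where "\<beta> ^ i < \<alpha>" using real_arch_pow_inv[OF \<alpha> \<beta>(2)] by blast
  then show "\<exists>i. P i" using accept less_imp_le by blast
  show "min 1 (\<beta> * \<alpha>) \<le> \<beta> ^ (LEAST i. P i)"
  proof (cases "LEAST i. P i")
    case (Suc j)
    then have "\<not> P j" using not_less_Least[of j P] by simp
    then have "\<alpha> < \<beta> ^ j" using accept by force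
    then have "\<beta> * \<alpha> \<le> \<beta> ^ Suc j" using \<beta>(1) by simp
    then show ?thesis using Suc by (simp add: min.coboundedI2)
  qed simp
qed

lemma armijo_backtracking_terminates:
  fixes f :: "'a::real_inner \<Rightarrow> real" and \<psi> :: "'a \<Rightarrow> ereal"
  assumes grad: "\<And>y. (f has_derivative (\<lambda>h. gradf y \<bullet> h)) (at y)"
    and Lip: "\<And>y z. norm (gradf y - gradf z) \<le> L * norm (y - z)" and L: "0 < L"
    and cvx: "ext_convex \<psi>" and ninf: "\<And>y. \<psi> y \<noteq> -\<infinity>"
    and px: "\<psi> x = ereal px" and p: "\<psi> (x + d) = ereal p"
    and decrease: "c * (gradf x \<bullet> d + p - px) \<le> - \<sigma> * (norm d)^2" and c: "0 < c" and \<sigma>: "0 < \<sigma>"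
    and \<beta>: "0 < \<beta>" "\<beta> < 1" and \<gamma>: "0 < \<gamma>" "\<gamma> < 1"
  shows "let P = (\<lambda>i::nat. ereal (f (x + \<beta> ^ i *\<^sub>R d)) + \<psi> (x + \<beta> ^ i *\<^sub>R d)
               \<le> ereal (f x) + \<psi> x + ereal (\<beta> ^ i * \<gamma>) * ereal (gradf x \<bullet> d + p - px)) in
           (\<exists>i. P i) \<and> \<beta> ^ (LEAST i. P i) \<ge> min 1 (2 * \<beta> * (1 - \<gamma>) * \<sigma> / (L * c))"
proof -
  define \<kappa> where "\<kappa> = \<sigma> / c"
  define \<alpha> where "\<alpha> = 2 * (1 - \<gamma>) * \<kappa> / L"
  have \<alpha>: "0 < \<alpha>" using \<gamma> \<sigma> c L by (simp add: \<alpha>_def \<kappa>_def)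
  have "gradf x \<bullet> d + p - px \<le> - \<kappa> * (norm d)^2"
    using decrease c by (simp add: \<kappa>_def field_simps)
  then have accept: "ereal (f (x + \<beta> ^ i *\<^sub>R d)) + \<psi> (x + \<beta> ^ i *\<^sub>R d)
      \<le> ereal (f x) + \<psi> x + ereal (\<beta> ^ i * \<gamma>) * ereal (gradf x \<bullet> d + p - px)"
    if "\<beta> ^ i \<le> \<alpha>" for i
    by (rule armijo_condition_small_step[OF grad Lip cvx ninf px p])
      (use that \<beta> \<gamma> L in \<open>auto simp: \<alpha>_def pos_le_divide_eq power_le_one\<close>)
  have step: "2 * \<beta> * (1 - \<gamma>) * \<sigma> / (L * c) = \<beta> * \<alpha>"
    using c by (simp add: \<alpha>_def \<kappa>_def field_simps)
  show ?thesis
    unfolding Let_def step by (intro conjI backtracking_terminates[OF \<beta> \<alpha>] accept)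
qed

theorem corollary1:
  fixes f :: "real^'n \<Rightarrow> real" and gradf :: "real^'n \<Rightarrow> real^'n"
    and \<psi> :: "real^'n \<Rightarrow> ereal" and L :: real
    and x d :: "real^'n" and H :: "real^'n^'n" and \<sigma> \<eta> :: real
  defines "F \<equiv> (\<lambda>y. ereal (f y) + \<psi> y)"
  assumes grad: "\<And>y. (f has_derivative (\<lambda>h. gradf y \<bullet> h)) (at y)"
    and Lpos: "L > 0"
    and Lip: "\<And>y z. norm (gradf y - gradf z) \<le> L * norm (y - z)"
    and psi_cvx: "ext_convex \<psi>" and psi_proper: "ext_proper \<psi>" and psi_closed: "ext_closed \<psi>"
    and F_bdd: "\<exists>c::real. \<forall>y. ereal c \<le> F y"
    and Omega: "\<exists>y. F y = (INF z. F z)"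
    and xdom: "x \<in> dom_fun \<psi>"
    and Hsym: "transpose H = H"
    and sigma: "lambda_min H = \<sigma>" and sigma_pos: "\<sigma> > 0"
    and eta: "0 \<le> \<eta>" "\<eta> < 1"
    and inexact: "eta_inexact \<eta> (gradf x) \<psi> x H d"
  shows "(let \<Delta> = ereal (gradf x \<bullet> d) + \<psi> (x + d) - \<psi> x in
           \<Delta> \<le> ereal (- (1 / (1 + sqrt \<eta>)) * (d \<bullet> (H *v d))) \<and>
           ereal (- (1 / (1 + sqrt \<eta>)) * (d \<bullet> (H *v d)))
             \<le> ereal (- (\<sigma> / (1 + sqrt \<eta>)) * (norm d)\<^sup>2) \<and>
           (\<forall>\<beta> \<gamma>::real. 0 < \<beta> \<and> \<beta> < 1 \<and> 0 < \<gamma> \<and> \<gamma> < 1 \<longrightarrow>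
              (let P = (\<lambda>i::nat. F (x + (\<beta> ^ i) *\<^sub>R d) \<le> F x + ereal (\<beta> ^ i * \<gamma>) * \<Delta>) in
                (\<exists>i. P i) \<and>
                \<beta> ^ (LEAST i. P i) \<ge> min 1 (2 * \<beta> * (1 - \<gamma>) * \<sigma> / (L * (1 + sqrt \<eta>))))))"
proof -
  have ninf: "\<And>y. \<psi> y \<noteq> -\<infinity>" using psi_proper unfolding ext_proper_def by auto
  obtain px where px: "\<psi> x = ereal px"
    using xdom ninf[of x] unfolding dom_fun_def by (cases "\<psi> x") auto
  have coercive: "\<And>v. \<sigma> * (norm v)^2 \<le> v \<bullet> (H *v v)"
    using quadratic_form_ge_lambda_min[OF Hsym] sigma by blast
  obtain c where "\<And>y. ereal c \<le> F y" using F_bdd by blast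
  then have "Qstar (gradf x) \<psi> x H \<noteq> -\<infinity>"
    by (intro Qstar_neq_minf[OF grad Lip Lpos psi_cvx ninf px _ coercive sigma_pos]) (simp add: F_def)
  then have decrease: "ereal (gradf x \<bullet> d) + \<psi> (x + d) - \<psi> x
                         \<le> ereal (- (1 / (1 + sqrt \<eta>)) * (d \<bullet> (H *v d)))"
    using eta_inexact_decrease[OF psi_cvx ninf px _ _ eta inexact] coercive[of d] sigma_pos
    by (meson order_trans mult_nonneg_nonneg zero_le_power2 less_imp_le)
  then obtain p where p: "\<psi> (x + d) = ereal p"
    using ninf[of "x + d"] px by (cases "\<psi> (x + d)") auto
  have one_plus: "0 < 1 + sqrt \<eta>" using eta by (simp add: add_pos_nonneg)
  have curvature: "- (1 / (1 + sqrt \<eta>)) * (d \<bullet> (H *v d)) \<le> - (\<sigma> / (1 + sqrt \<eta>)) * (norm d)^2"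
    using coercive[of d] one_plus by (simp add: divide_right_mono)
  have "gradf x \<bullet> d + p - px \<le> - (1 / (1 + sqrt \<eta>)) * (d \<bullet> (H *v d))"
    using decrease by (simp add: p px)
  then have "(1 + sqrt \<eta>) * (gradf x \<bullet> d + p - px) \<le> - \<sigma> * (norm d)^2"
    using one_plus coercive[of d] by (simp add: field_simps)
  note linesearch = armijo_backtracking_terminates[OF grad Lip Lpos psi_cvx ninf px p this one_plus sigma_pos]
  show ?thesis
    using decrease curvature linesearch unfolding F_def by (simp add: p px Let_def)
qed

end
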